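(* Let $d=2$, $\varepsilon>0$, $\pi<q^{2+\varepsilon}$ and $L=q^{-1-\varepsilon/3}$. For $q$ small enough, \[ \nu\otimes\mu\left([L]^{2}\text{ is good}\right)\ge1-2q^{\varepsilon/3}. \]
   Context: Environment $\omega\in\{\text{susceptible},\text{immune}\}^{\mathbb{Z}^2}$ is drawn from $\nu$, the product measure with $\nu(\omega_x=\text{immune})=\pi$; given $\omega$, a configuration $\eta\in\{i,h\}^{\mathcal{S}}$ on the susceptible set $\mathcal{S}$ is drawn from $\mu$, the product measure with $\mu(\eta_x=i)=q$ ($i$ = infected, $h$ = healthy); $\nu\otimes\mu$ is the joint law. $[L]=\{1,\dots,L\}$ (with $L$ rounded to an integer). A square of the form $x+[L]^2$ is good if all its sites are susceptible and each of its rows and columns contains at least one infected site. *)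

theory Defs
  imports "HOL-Probability.Probability"
begin

type_synonym site = "int \<times> int"

text \<open>Environment: omega x = True means site x is immune (prob. pi_imm).
  Infection configuration: eta x = True means x is infected (prob. q).
  eta is sampled on all of Z^2 independently of omega; its restriction to the
  susceptible set has exactly the law mu given omega.\<close>

definition env_measure :: "real \<Rightarrow> (site \<Rightarrow> bool) measure" where
  "env_measure pim = PiM UNIV (\<lambda>_. measure_pmf (bernoulli_pmf pim))"

definition inf_measure :: "real \<Rightarrow> (site \<Rightarrow> bool) measure" where
  "inf_measure q = PiM UNIV (\<lambda>_. measure_pmf (bernoulli_pmf q))"

definition joint_law :: "real \<Rightarrow> real \<Rightarrow> ((site \<Rightarrow> bool) \<times> (site \<Rightarrow> bool)) measure" where
  "joint_law pim q = env_measure pim \<Otimes>\<^sub>M inf_measure q"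

definition good_square :: "nat \<Rightarrow> site \<Rightarrow> (site \<Rightarrow> bool) \<Rightarrow> (site \<Rightarrow> bool) \<Rightarrow> bool" where
  "good_square L x omega eta \<longleftrightarrow>
     (\<forall>a\<in>{1..int L}. \<forall>b\<in>{1..int L}. \<not> omega (fst x + a, snd x + b)) \<and>
     (\<forall>b\<in>{1..int L}. \<exists>a\<in>{1..int L}. eta (fst x + a, snd x + b)) \<and>
     (\<forall>a\<in>{1..int L}. \<exists>b\<in>{1..int L}. eta (fst x + a, snd x + b))"

end

theory Submission
  imports Defs "HOL-Real_Asymp.Real_Asymp"
begin

text \<open>By the union bound, the square \<open>[L]\<^sup>2\<close> fails to be good with probability at most
  \<open>L\<^sup>2 \<pi> + 2 L (1 - q)\<^sup>L\<close>: either one of its \<open>L\<^sup>2\<close> sites is immune, or one of its \<open>2L\<close>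
  rows and columns contains no infected site. For \<open>L \<approx> q\<^bsup>-1-\<epsilon>/3\<^esup>\<close> and \<open>\<pi> < q\<^bsup>2+\<epsilon>\<^esup>\<close> the
  first term is about \<open>q\<^bsup>\<epsilon>/3\<^esup>\<close>, while the second is at most \<open>2 L exp (-q L)\<close>, which
  is of order \<open>q\<^bsup>-1-\<epsilon>/3\<^esup> exp (-q\<^bsup>-\<epsilon>/3\<^esup>)\<close> and hence negligible.\<close>

abbreviation bernoulli_field :: "real \<Rightarrow> ('i \<Rightarrow> bool) measure" where
  "bernoulli_field p \<equiv> PiM UNIV (\<lambda>_. measure_pmf (bernoulli_pmf p))"

definition false_on :: "'i set \<Rightarrow> ('i \<Rightarrow> bool) set" where
  "false_on J = {f. \<forall>j\<in>J. \<not> f j}"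

lemma prob_space_bernoulli_field: "prob_space (bernoulli_field p)"
  by (rule prob_space_PiM) (rule prob_space_measure_pmf)

lemma space_bernoulli_field: "space (bernoulli_field p) = UNIV"
  by (simp add: space_PiM)

lemma false_on_eq_prod_emb:
  "false_on J = prod_emb UNIV (\<lambda>_. measure_pmf (bernoulli_pmf p)) J (Pi\<^sub>E J (\<lambda>_. {False}))"
  unfolding false_on_def prod_emb_def space_PiM
  by (auto simp: PiE_iff restrict_def fun_eq_iff split: if_splits)

lemma sets_bernoulli_field_false_on:
  "finite J \<Longrightarrow> false_on J \<in> sets (bernoulli_field p)"
  unfolding false_on_eq_prod_emb[of J p] by (intro sets_PiM_I) auto

lemma measure_bernoulli_field_false_on:
  fixes p :: real
  assumes "finite J" "0 \<le> p" "p \<le> 1"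
  shows "measure (bernoulli_field p) (false_on J) = (1 - p) ^ card J"
proof -
  interpret product_prob_space "\<lambda>_. measure_pmf (bernoulli_pmf p)" UNIV
    by unfold_locales
  show ?thesis
    unfolding false_on_eq_prod_emb[of J p]
    using assms by (subst measure_PiM_emb) (auto simp: measure_pmf_single)
qed

lemma measure_bernoulli_field_not_false_on_le:
  fixes p :: real
  assumes "finite J" "0 \<le> p" "p \<le> 1"
  shows "measure (bernoulli_field p) (UNIV - false_on J) \<le> card J * p"
proof -
  interpret prob_space "bernoulli_field p"
    by (rule prob_space_bernoulli_field)
  have "measure (bernoulli_field p) (UNIV - false_on J) = 1 - (1 - p) ^ card J"
    using prob_compl[OF sets_bernoulli_field_false_on[OF assms(1)]]
    by (simp add: space_bernoulli_field measure_bernoulli_field_false_on[OF assms])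
  also have "\<dots> \<le> card J * p"
    using Bernoulli_inequality[of "- p" "card J"] assms by simp
  finally show ?thesis .
qed

lemma measure_pair_measure_Times_space:
  assumes "prob_space M" "prob_space N" "A \<in> sets M"
  shows "measure (M \<Otimes>\<^sub>M N) (A \<times> space N) = measure M A"
proof -
  interpret pair_prob_space M N
    using assms by (simp add: pair_prob_space_def pair_sigma_finite_def prob_space_imp_sigma_finite)
  show ?thesis
    using assms(3) by (simp add: measure_def M2.emeasure_pair_measure_Times M2.emeasure_space_1)
qed

lemma measure_pair_measure_space_Times:
  assumes "prob_space M" "prob_space N" "B \<in> sets N"
  shows "measure (M \<Otimes>\<^sub>M N) (space M \<times> B) = measure N B"
proof -
  interpret pair_prob_space M N
    using assms by (simp add: pair_prob_space_def pair_sigma_finite_def prob_space_imp_sigma_finite)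
  show ?thesis
    using assms(3) by (simp add: measure_def M2.emeasure_pair_measure_Times M1.emeasure_space_1)
qed

lemma prob_space_joint_law: "prob_space (joint_law pim q)"
  unfolding joint_law_def env_measure_def inf_measure_def
  by (intro prob_space_pair prob_space_bernoulli_field)

lemma space_joint_law: "space (joint_law pim q) = UNIV"
  by (simp add: joint_law_def env_measure_def inf_measure_def space_pair_measure space_PiM)

lemma sets_joint_law_Times:
  "A \<in> sets (bernoulli_field pim) \<Longrightarrow> B \<in> sets (bernoulli_field q) \<Longrightarrow> A \<times> B \<in> sets (joint_law pim q)"
  unfolding joint_law_def env_measure_def inf_measure_def by (rule pair_measureI)

lemma measure_joint_law_immune_le:
  fixes pim :: real
  assumes "finite J" "0 \<le> pim" "pim \<le> 1"
  shows "measure (joint_law pim q) ((UNIV - false_on J) \<times> UNIV) \<le> card J * pim"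
proof -
  have "UNIV - false_on J \<in> sets (bernoulli_field pim)"
    using sets_bernoulli_field_false_on[OF assms(1)] sets.compl_sets space_bernoulli_field
    by metis
  then have "measure (joint_law pim q) ((UNIV - false_on J) \<times> UNIV)
      = measure (bernoulli_field pim) (UNIV - false_on J)"
    using measure_pair_measure_Times_space[OF prob_space_bernoulli_field prob_space_bernoulli_field]
    unfolding joint_law_def env_measure_def inf_measure_def by (simp add: space_bernoulli_field)
  also have "\<dots> \<le> card J * pim"
    using assms by (rule measure_bernoulli_field_not_false_on_le)
  finally show ?thesis .
qed

lemma measure_joint_law_uninfected_line_le:
  fixes q :: real
  assumes "finite I" "\<And>i. i \<in> I \<Longrightarrow> finite (line i) \<and> card (line i) = n" "0 \<le> q" "q \<le> 1"
  shows "measure (joint_law pim q) (\<Union>i\<in>I. UNIV \<times> false_on (line i)) \<le> card I * (1 - q) ^ n"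
proof -
  have "measure (joint_law pim q) (UNIV \<times> false_on (line i)) = (1 - q) ^ n" if "i \<in> I" for i
  proof -
    have line: "finite (line i)" "card (line i) = n"
      using assms(2)[OF that] by auto
    show ?thesis
      using measure_pair_measure_space_Times[where M="bernoulli_field pim" and N="bernoulli_field q",
          OF prob_space_bernoulli_field prob_space_bernoulli_field sets_bernoulli_field_false_on[OF line(1)]]
        measure_bernoulli_field_false_on[OF line(1) assms(3,4)] line(2)
      unfolding joint_law_def env_measure_def inf_measure_def by (simp add: space_bernoulli_field)
  qed
  moreover have "UNIV \<times> false_on (line i) \<in> sets (joint_law pim q)" if "i \<in> I" for i
    using assms(2)[OF that] sets.top[of "bernoulli_field pim"]
    by (intro sets_joint_law_Times sets_bernoulli_field_false_on) (auto simp: space_bernoulli_field)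
  ultimately show ?thesis
    using measure_UNION_le[OF assms(1), of "\<lambda>i. UNIV \<times> false_on (line i)" "joint_law pim q"]
    by simp
qed

definition square_sites :: "nat \<Rightarrow> site \<Rightarrow> site set" where
  "square_sites L x = (\<lambda>(a, b). (fst x + a, snd x + b)) ` ({1..int L} \<times> {1..int L})"

definition row_sites :: "nat \<Rightarrow> site \<Rightarrow> int \<Rightarrow> site set" where
  "row_sites L x b = (\<lambda>a. (fst x + a, snd x + b)) ` {1..int L}"

definition column_sites :: "nat \<Rightarrow> site \<Rightarrow> int \<Rightarrow> site set" where
  "column_sites L x a = (\<lambda>b. (fst x + a, snd x + b)) ` {1..int L}"

lemma finite_square_sites: "finite (square_sites L x)"
  by (simp add: square_sites_def)

lemma card_square_sites: "card (square_sites L x) = L * L"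
  unfolding square_sites_def by (subst card_image) (auto simp: inj_on_def)

lemma finite_row_sites: "finite (row_sites L x b)"
  by (simp add: row_sites_def)

lemma card_row_sites: "card (row_sites L x b) = L"
  unfolding row_sites_def by (subst card_image) (auto simp: inj_on_def)

lemma finite_column_sites: "finite (column_sites L x a)"
  by (simp add: column_sites_def)

lemma card_column_sites: "card (column_sites L x a) = L"
  unfolding column_sites_def by (subst card_image) (auto simp: inj_on_def)

lemma good_square_iff:
  "good_square L x omega eta \<longleftrightarrow>
     omega \<in> false_on (square_sites L x) \<and>
     (\<forall>b\<in>{1..int L}. eta \<notin> false_on (row_sites L x b)) \<and>
     (\<forall>a\<in>{1..int L}. eta \<notin> false_on (column_sites L x a))"
  by (auto simp: good_square_def false_on_def square_sites_def row_sites_def column_sites_def)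

lemma measure_good_square_ge:
  fixes q pim :: real
  assumes "0 \<le> q" "q \<le> 1" "0 \<le> pim" "pim \<le> 1"
  shows "measure (joint_law pim q) {(omega, eta). good_square L x omega eta}
           \<ge> 1 - (real L * real L * pim + 2 * real L * (1 - q) ^ L)"
proof -
  interpret prob_space "joint_law pim q"
    by (rule prob_space_joint_law)
  define S where "S = {1..int L}"
  define immune where "immune = (UNIV - false_on (square_sites L x)) \<times> (UNIV :: (site \<Rightarrow> bool) set)"
  define empty_row where "empty_row = (\<Union>b\<in>S. (UNIV :: (site \<Rightarrow> bool) set) \<times> false_on (row_sites L x b))"
  define empty_column where "empty_column = (\<Union>a\<in>S. (UNIV :: (site \<Rightarrow> bool) set) \<times> false_on (column_sites L x a))"
  have S: "finite S" "card S = L"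
    by (simp_all add: S_def)
  have sets_top: "UNIV \<in> sets (bernoulli_field p)" for p
    using sets.top space_bernoulli_field by metis
  have "immune \<in> events"
    unfolding immune_def using sets_bernoulli_field_false_on[OF finite_square_sites] sets_top
    by (intro sets_joint_law_Times sets.Diff) auto
  moreover have "empty_row \<in> events" "empty_column \<in> events"
    unfolding empty_row_def empty_column_def using S(1)
    by (auto intro!: sets.finite_UN sets_joint_law_Times sets_bernoulli_field_false_on
        finite_row_sites finite_column_sites sets_top)
  moreover have "{(omega, eta). good_square L x omega eta}
      = space (joint_law pim q) - (immune \<union> empty_row \<union> empty_column)"
    unfolding space_joint_law immune_def empty_row_def empty_column_def good_square_iff S_def
    by auto
  moreover have "prob immune \<le> real L * real L * pim"
    unfolding immune_def using measure_joint_law_immune_le[OF finite_square_sites assms(3,4)]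
    by (simp add: card_square_sites)
  moreover have "prob empty_row \<le> real L * (1 - q) ^ L" "prob empty_column \<le> real L * (1 - q) ^ L"
    unfolding empty_row_def empty_column_def
    using measure_joint_law_uninfected_line_le[OF S(1) _ assms(1,2)] S(2)
    by (simp_all add: finite_row_sites card_row_sites finite_column_sites card_column_sites)
  ultimately show ?thesis
    using measure_Un_le[of immune "joint_law pim q" empty_row]
      measure_Un_le[of "immune \<union> empty_row" "joint_law pim q" empty_column]
    by (simp add: prob_compl)
qed

lemma nat_round_bounds:
  fixes x :: real
  assumes "0 \<le> x"
  shows "x - 1/2 \<le> real (nat (round x))" "real (nat (round x)) \<le> x + 1/2"
proof -
  have "0 \<le> round x"
    using of_int_round_gt[of x] assms by linarith
  then show "x - 1/2 \<le> real (nat (round x))" "real (nat (round x)) \<le> x + 1/2"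
    using of_int_round_ge[of x] of_int_round_le[of x] by simp_all
qed

lemma one_minus_power_le_exp:
  fixes q :: real
  assumes "q \<le> 1"
  shows "(1 - q) ^ n \<le> exp (- q * n)"
proof -
  have "(1 - q) ^ n \<le> exp (- q) ^ n"
    using assms exp_ge_add_one_self[of "- q"] by (intro power_mono) auto
  then show ?thesis
    by (simp add: exp_of_nat_mult[symmetric] mult.commute)
qed

lemma union_bound_at_round_le:
  fixes q pim r x :: real
  assumes "0 \<le> q" "q \<le> 1" "0 \<le> pim" "pim \<le> r" "0 \<le> x"
  defines "L \<equiv> nat (round x)"
  shows "real L * real L * pim + 2 * real L * (1 - q) ^ L
           \<le> (x + 1/2)\<^sup>2 * r + 2 * (x + 1/2) * exp (- q * (x - 1/2))"
proof -
  have L: "x - 1/2 \<le> real L" "real L \<le> x + 1/2"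
    unfolding L_def using nat_round_bounds[OF assms(5)] by simp_all
  have "real L * real L * pim \<le> (x + 1/2)\<^sup>2 * r"
    using L assms by (intro mult_mono) (auto simp: power2_eq_square mult_mono)
  moreover have "- q * real L \<le> - q * (x - 1/2)"
    using L(1) assms(1) by (simp add: mult_left_mono)
  then have "(1 - q) ^ L \<le> exp (- q * (x - 1/2))"
    using one_minus_power_le_exp[OF assms(2), of L] by (meson exp_le_cancel_iff order_trans)
  then have "2 * real L * (1 - q) ^ L \<le> 2 * (x + 1/2) * exp (- q * (x - 1/2))"
    using L assms(2) by (intro mult_mono) auto
  ultimately show ?thesis
    by linarith
qed

lemma union_bound_eventually_small:
  fixes \<epsilon> :: real
  assumes "\<epsilon> > 0"
  shows "\<forall>\<^sub>F q in at_right 0.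
           (q powr (-1 - \<epsilon>/3) + 1/2)\<^sup>2 * q powr (2 + \<epsilon>)
           + 2 * (q powr (-1 - \<epsilon>/3) + 1/2) * exp (- q * (q powr (-1 - \<epsilon>/3) - 1/2))
         \<le> 2 * q powr (\<epsilon>/3)"
  using assms by real_asymp

theorem claim1:
  fixes \<epsilon> :: real
  assumes "\<epsilon> > 0"
  shows "\<exists>q0 > 0. \<forall>q pim :: real. 0 < q \<and> q < q0 \<and> 0 \<le> pim \<and> pim < q powr (2 + \<epsilon>) \<longrightarrow>
           (let L = nat (round (q powr (-1 - \<epsilon> / 3))) in
              measure (joint_law pim q) {(omega, eta). good_square L (0, 0) omega eta}
                \<ge> 1 - 2 * q powr (\<epsilon> / 3))"
proof -
  obtain q1 :: real where "q1 > 0" and small: "\<And>q. 0 < q \<Longrightarrow> q < q1 \<Longrightarrow>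
      (q powr (-1 - \<epsilon>/3) + 1/2)\<^sup>2 * q powr (2 + \<epsilon>)
      + 2 * (q powr (-1 - \<epsilon>/3) + 1/2) * exp (- q * (q powr (-1 - \<epsilon>/3) - 1/2))
      \<le> 2 * q powr (\<epsilon>/3)"
    using union_bound_eventually_small[OF assms] unfolding eventually_at_right_field by auto
  show ?thesis
  proof (intro exI[of _ "min q1 1"] conjI allI impI)
    show "min q1 1 > 0"
      using \<open>q1 > 0\<close> by simp
    fix q pim :: real
    assume "0 < q \<and> q < min q1 1 \<and> 0 \<le> pim \<and> pim < q powr (2 + \<epsilon>)"
    then have q: "0 < q" "q < q1" "q \<le> 1" and pim: "0 \<le> pim" "pim \<le> q powr (2 + \<epsilon>)"
      by auto
    moreover have "q powr (2 + \<epsilon>) \<le> 1"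
      using q assms by (intro powr_le1) auto
    ultimately have pim1: "pim \<le> 1"
      by linarith
    define x where "x = q powr (-1 - \<epsilon> / 3)"
    have "0 \<le> x"
      by (simp add: x_def)
    with q pim pim1 show "let L = nat (round (q powr (-1 - \<epsilon> / 3))) in
        measure (joint_law pim q) {(omega, eta). good_square L (0, 0) omega eta}
          \<ge> 1 - 2 * q powr (\<epsilon> / 3)"
      using measure_good_square_ge[of q pim "nat (round x)" "(0, 0)"]
        union_bound_at_round_le[of q pim "q powr (2 + \<epsilon>)" x] small[OF q(1,2)]
      unfolding Let_def x_def[symmetric] by linarith
  qed
qed

end
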